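(* Let $P_0,P_1$ be a two-outcome verifier with associated operators $\rho=R_1,R_2,\dots,R_r$ (as in the context), and suppose $P_0,P_1,R_1,\dots,R_r$ are all diagonal with respect to the tensor product of fixed orthonormal bases of the spaces $\mathcal{X}_1,\dots,\mathcal{X}_r,\mathcal{Y}_1,\dots,\mathcal{Y}_r$. Then for every integer $n\ge1$ and every $k\in\{0,\dots,n\}$, \[ p'_{n,k}=\sum_{t=k}^{n}\binom{n}{t}p^t(1-p)^{n-t}. \]
   Context: Fix an integer $r\ge1$ and finite-dimensional complex Hilbert spaces $\mathcal{X}_1,\dots,\mathcal{X}_r$, $\mathcal{Y}_1,\dots,\mathcal{Y}_r$. Write $\mathcal{X}_{1\ldots j}=\mathcal{X}_1\otimes\cdots\otimes\mathcal{X}_j$, similarly $\mathcal{Y}_{1\ldots j}$; tensor products in different orders are identified via the obvious permutation of factors. $\mathrm{Pos}$ = positive semidefinite operators, $\mathrm{D}$ = density operators, $\langle A,B\rangle=\mathrm{Tr}(A^*B)$. A two-outcome verifier is a pair $P_0,P_1\in\mathrm{Pos}(\mathcal{Y}_{1\ldots r}\otimes\mathcal{X}_{1\ldots r})$ for which there exist $R_1=\rho\in\mathrm{D}(\mathcal{X}_1)$ and $R_j\in\mathrm{Pos}(\mathcal{Y}_{1\ldots j-1}\otimes\mathcal{X}_{1\ldots j})$, $2\le j\le r$, with $\mathrm{Tr}_{\mathcal{X}_{j+1}}(R_{j+1})=\mathbb{I}_{\mathcal{Y}_j}\otimes R_j$ for $1\le j\le r-1$ and $P_0+P_1=\mathbb{I}_{\mathcal{Y}_r}\otimes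 R_r$. For $n\ge1$, an $n$-fold strategy is $X\in\mathrm{Pos}((\mathcal{Y}_{1\ldots r}\otimes\mathcal{X}_{1\ldots r})^{\otimes n})$ such that there exist $X_j\in\mathrm{Pos}(\mathcal{Y}_{1\ldots j}^{\otimes n}\otimes\mathcal{X}_{1\ldots j}^{\otimes n})$, $1\le j\le r$, with $X_r=X$, $\mathrm{Tr}_{\mathcal{Y}_1^{\otimes n}}(X_1)=\mathbb{I}_{\mathcal{X}_1^{\otimes n}}$, $\mathrm{Tr}_{\mathcal{Y}_j^{\otimes n}}(X_j)=X_{j-1}\otimes\mathbb{I}_{\mathcal{X}_j^{\otimes n}}$ for $2\le j\le r$. Let $\Sigma^n_{\ge k}\subseteq\{0,1\}^n$ be the strings with at least $k$ ones. Define $p=\sup\{\langle P_1,X\rangle: X \text{ a 1-fold strategy}\}$ (optimal single-copy winning probability) and $p'_{n,k}=\sup\{\sum_{(i_1,\dots,i_n)\in\Sigma^n_{\ge k}}\langle P_{i_1}\otimes\cdots\otimes P_{i_n},X\rangle: X \text{ an } n\text{-fold strategy}\}$ (optimal probability of winning at least $k$ of $n$ parallel copies). *)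

theory Defs
  imports Complex_Main
begin

text \<open>Tensor factors are labelled: LX c j is the space X_j of copy c, LY c j the
space Y_j of copy c (rounds j = 1..r, copies c = 0..n-1; a single copy uses c = 0).
Each space is identified with C^d via its fixed orthonormal basis, so a basis state
of the tensor product of the factors in a label set S is a function a assigning to
each label l in S an index a l < dim l (and 0 outside S). An operator is a complex
matrix indexed by such basis states; only its entries on basis states matter.\<close>

datatype lab = LX nat nat | LY nat nat

fun ldim :: "(nat \<Rightarrow> nat) \<Rightarrow> (nat \<Rightarrow> nat) \<Rightarrow> lab \<Rightarrow> nat" where
  "ldim dX dY (LX c j) = dX j"
| "ldim dX dY (LY c j) = dY j"

type_synonym idx = "lab \<Rightarrow> nat"
type_synonym op = "idx \<Rightarrow> idx \<Rightarrow> complex"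

definition basis :: "(lab \<Rightarrow> nat) \<Rightarrow> lab set \<Rightarrow> idx set" where
  "basis d S = {a. \<forall>l. (l \<in> S \<longrightarrow> a l < d l) \<and> (l \<notin> S \<longrightarrow> a l = 0)}"

definition restr :: "idx \<Rightarrow> lab set \<Rightarrow> idx" where
  "restr a S = (\<lambda>l. if l \<in> S then a l else 0)"

definition merge :: "idx \<Rightarrow> idx \<Rightarrow> lab set \<Rightarrow> idx" where
  "merge a c T = (\<lambda>l. if l \<in> T then c l else a l)"

definition idop :: op where
  "idop a b = (if a = b then 1 else 0)"

definition tens :: "lab set \<Rightarrow> op \<Rightarrow> lab set \<Rightarrow> op \<Rightarrow> op" where
  "tens S A T B = (\<lambda>a b. A (restr a S) (restr b S) * B (restr a T) (restr b T))"

definition ptrace :: "(lab \<Rightarrow> nat) \<Rightarrow> lab set \<Rightarrow> op \<Rightarrow> op" where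
  "ptrace d T M = (\<lambda>a b. \<Sum>c\<in>basis d T. M (merge a c T) (merge b c T))"

definition op_eq :: "(lab \<Rightarrow> nat) \<Rightarrow> lab set \<Rightarrow> op \<Rightarrow> op \<Rightarrow> bool" where
  "op_eq d S A B \<longleftrightarrow> (\<forall>a\<in>basis d S. \<forall>b\<in>basis d S. A a b = B a b)"

definition psd :: "(lab \<Rightarrow> nat) \<Rightarrow> lab set \<Rightarrow> op \<Rightarrow> bool" where
  "psd d S M \<longleftrightarrow> (\<forall>v :: idx \<Rightarrow> complex.
     (let q = (\<Sum>a\<in>basis d S. \<Sum>b\<in>basis d S. cnj (v a) * M a b * v b)
      in Im q = 0 \<and> 0 \<le> Re q))"

definition density :: "(lab \<Rightarrow> nat) \<Rightarrow> lab set \<Rightarrow> op \<Rightarrow> bool" where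
  "density d S M \<longleftrightarrow> psd d S M \<and> (\<Sum>a\<in>basis d S. M a a) = 1"

definition diagonal :: "(lab \<Rightarrow> nat) \<Rightarrow> lab set \<Rightarrow> op \<Rightarrow> bool" where
  "diagonal d S M \<longleftrightarrow> (\<forall>a\<in>basis d S. \<forall>b\<in>basis d S. a \<noteq> b \<longrightarrow> M a b = 0)"

definition inner_op :: "(lab \<Rightarrow> nat) \<Rightarrow> lab set \<Rightarrow> op \<Rightarrow> op \<Rightarrow> complex" where
  "inner_op d S A B = (\<Sum>a\<in>basis d S. \<Sum>b\<in>basis d S. cnj (A a b) * B a b)"

definition VX :: "nat \<Rightarrow> nat \<Rightarrow> lab set" where
  "VX c j = {LX c i | i. 1 \<le> i \<and> i \<le> j}"
definition VY :: "nat \<Rightarrow> nat \<Rightarrow> lab set" where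
  "VY c j = {LY c i | i. 1 \<le> i \<and> i \<le> j}"

definition NX :: "nat \<Rightarrow> nat \<Rightarrow> lab set" where
  "NX n j = (\<Union>c<n. VX c j)"
definition NY :: "nat \<Rightarrow> nat \<Rightarrow> lab set" where
  "NY n j = (\<Union>c<n. VY c j)"
definition LXs :: "nat \<Rightarrow> nat \<Rightarrow> lab set" where
  "LXs n j = {LX c j | c. c < n}"
definition LYs :: "nat \<Rightarrow> nat \<Rightarrow> lab set" where
  "LYs n j = {LY c j | c. c < n}"

definition is_verifier ::
  "(nat \<Rightarrow> nat) \<Rightarrow> (nat \<Rightarrow> nat) \<Rightarrow> nat \<Rightarrow> op \<Rightarrow> op \<Rightarrow> (nat \<Rightarrow> op) \<Rightarrow> bool" where
  "is_verifier dX dY r P0 P1 R \<longleftrightarrow>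
    (let d = ldim dX dY; V = VY 0 r \<union> VX 0 r in
      psd d V P0 \<and> psd d V P1 \<and>
      density d (VX 0 1) (R 1) \<and>
      (\<forall>j\<in>{2..r}. psd d (VY 0 (j - 1) \<union> VX 0 j) (R j)) \<and>
      (\<forall>j\<in>{1..<r}. op_eq d (VY 0 j \<union> VX 0 j)
          (ptrace d {LX 0 (j + 1)} (R (j + 1)))
          (tens {LY 0 j} idop (VY 0 (j - 1) \<union> VX 0 j) (R j))) \<and>
      op_eq d V (\<lambda>a b. P0 a b + P1 a b)
          (tens {LY 0 r} idop (VY 0 (r - 1) \<union> VX 0 r) (R r)))"

definition is_strategy :: "(nat \<Rightarrow> nat) \<Rightarrow> (nat \<Rightarrow> nat) \<Rightarrow> nat \<Rightarrow> nat \<Rightarrow> op \<Rightarrow> bool" where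
  "is_strategy dX dY r n X \<longleftrightarrow>
    (let d = ldim dX dY in
     \<exists>Xs :: nat \<Rightarrow> op.
      (\<forall>j\<in>{1..r}. psd d (NY n j \<union> NX n j) (Xs j)) \<and>
      op_eq d (NY n r \<union> NX n r) (Xs r) X \<and>
      op_eq d (NX n 1) (ptrace d (LYs n 1) (Xs 1)) idop \<and>
      (\<forall>j\<in>{2..r}. op_eq d (NY n (j - 1) \<union> NX n j)
          (ptrace d (LYs n j) (Xs j))
          (tens (NY n (j - 1) \<union> NX n (j - 1)) (Xs (j - 1)) (LXs n j) idop)))"

fun mv :: "nat \<Rightarrow> lab \<Rightarrow> lab" where
  "mv c (LX i j) = LX c j"
| "mv c (LY i j) = LY c j"

definition copyop :: "nat \<Rightarrow> nat \<Rightarrow> op \<Rightarrow> op" where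
  "copyop r c P = (\<lambda>a b. P (restr (a \<circ> mv c) (VY 0 r \<union> VX 0 r))
                           (restr (b \<circ> mv c) (VY 0 r \<union> VX 0 r)))"

text \<open>P_{i_1} \<otimes> ... \<otimes> P_{i_n}; the string (i_1..i_n) is a bool list (True = 1).\<close>
definition prodop :: "nat \<Rightarrow> op \<Rightarrow> op \<Rightarrow> bool list \<Rightarrow> op" where
  "prodop r P0 P1 bs = (\<lambda>a b. \<Prod>c<length bs. copyop r c (if bs ! c then P1 else P0) a b)"

text \<open>Optimal single-copy winning probability p (the values are real; Re just
extracts them).\<close>
definition win_prob :: "(nat \<Rightarrow> nat) \<Rightarrow> (nat \<Rightarrow> nat) \<Rightarrow> nat \<Rightarrow> op \<Rightarrow> real" where
  "win_prob dX dY r P1 =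
     Sup {Re (inner_op (ldim dX dY) (VY 0 r \<union> VX 0 r) P1 X) | X. is_strategy dX dY r 1 X}"

definition win_atleast ::
  "(nat \<Rightarrow> nat) \<Rightarrow> (nat \<Rightarrow> nat) \<Rightarrow> nat \<Rightarrow> op \<Rightarrow> op \<Rightarrow> nat \<Rightarrow> nat \<Rightarrow> real" where
  "win_atleast dX dY r P0 P1 n k =
     Sup {Re (\<Sum>bs\<in>{bs. length bs = n \<and> k \<le> length (filter id bs)}.
                inner_op (ldim dX dY) (NY n r \<union> NX n r) (prodop r P0 P1 bs) X)
          | X. is_strategy dX dY r n X}"

end

theory Submission
  imports Defs
begin

text \<open>For diagonal verifiers only the diagonal entries of a strategy matter, so the
interaction is a classical game, solved for a single copy by backward induction: p is the
optimal winning weight at the start. For n copies, consider at each round the strategy's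
weight on an n-fold transcript times the probability of winning at least k copies if every
copy continues optimally from its own transcript. This probability is a multiaffine
function of the per-copy (winning, total) weights that is monotone in each winning weight.
Going backwards through the rounds, the quantity can only grow when the answers of a round
are replaced by optimal ones, and it is unchanged when the questions of a round are summed
out, since it factorises over the copies. At the first round it equals the binomial tail
in p. Playing the optimal single-copy strategy independently in each copy attains it.\<close>

lemma basis_iff: "a \<in> basis d S \<longleftrightarrow> (\<forall>l\<in>S. a l < d l) \<and> (\<forall>l. l \<notin> S \<longrightarrow> a l = 0)"
  by (auto simp: basis_def)

lemma basis_empty: "basis d {} = {\<lambda>_. 0}"
  by (auto simp: basis_def)

lemma basis_upd: "h \<in> basis d S \<Longrightarrow> v < d l \<Longrightarrow> h(l := v) \<in> basis d (insert l S)"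
  unfolding basis_iff by auto

lemma merge_basis: "a \<in> basis d A \<Longrightarrow> b \<in> basis d B \<Longrightarrow> merge a b B \<in> basis d (A \<union> B)"
  unfolding basis_iff by (auto simp: merge_def)

lemma merge_restr: "a \<in> basis d S \<Longrightarrow> S \<inter> T = {} \<Longrightarrow> restr (merge a b T) S = a"
  by (auto simp: basis_def merge_def restr_def fun_eq_iff)

lemma restr_basis_self: "a \<in> basis d S \<Longrightarrow> restr a S = a"
  by (auto simp: basis_def restr_def fun_eq_iff)

lemma basis_eqI:
  assumes "a \<in> basis d (A \<union> B)" "b \<in> basis d (A \<union> B)"
    and "restr a A = restr b A" "restr a B = restr b B"
  shows "a = b"
proof
  fix l show "a l = b l"
    using assms fun_cong[OF assms(3), of l] fun_cong[OF assms(4), of l]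
    unfolding basis_iff restr_def by (metis Un_iff)
qed

lemma basis_insert_eq:
  assumes "l \<notin> S"
  shows "basis d (insert l S) = (\<lambda>(a, v). a(l := v)) ` (basis d S \<times> {..<d l})"
proof
  show "(\<lambda>(a, v). a(l := v)) ` (basis d S \<times> {..<d l}) \<subseteq> basis d (insert l S)"
    by (auto simp: basis_def)
  show "basis d (insert l S) \<subseteq> (\<lambda>(a, v). a(l := v)) ` (basis d S \<times> {..<d l})"
  proof
    fix c assume "c \<in> basis d (insert l S)"
    hence "c(l := 0) \<in> basis d S" "c l < d l" using assms by (auto simp: basis_def)
    moreover have "c = (c(l := 0))(l := c l)" by simp
    ultimately show "c \<in> (\<lambda>(a, v). a(l := v)) ` (basis d S \<times> {..<d l})"
      by (intro image_eqI[where x = "(c(l := 0), c l)"]) auto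
  qed
qed

lemma basis_insert_inj:
  assumes "l \<notin> S"
  shows "inj_on (\<lambda>(a, v). a(l := v)) (basis d S \<times> {..<d l})"
proof (rule inj_onI, clarify)
  fix a v a' v' assume "a \<in> basis d S" "a' \<in> basis d S" and e: "a(l := v) = a'(l := v')"
  hence "a l = 0" "a' l = 0" using assms by (auto simp: basis_def)
  moreover from e have "v = v'" by (metis fun_upd_same)
  moreover from e have "\<forall>x. x \<noteq> l \<longrightarrow> a x = a' x" by (metis fun_upd_other)
  ultimately show "a = a' \<and> v = v'" by (metis ext)
qed

lemma sum_basis_insert:
  assumes "l \<notin> S"
  shows "(\<Sum>c\<in>basis d (insert l S). f c) = (\<Sum>a\<in>basis d S. \<Sum>v<d l. f (a(l := v)))"
proof -
  have "(\<Sum>c\<in>basis d (insert l S). f c) = (\<Sum>(a, v)\<in>basis d S \<times> {..<d l}. f (a(l := v)))"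
    unfolding basis_insert_eq[OF assms]
    by (subst sum.reindex[OF basis_insert_inj[OF assms]]) (simp add: case_prod_unfold comp_def)
  then show ?thesis by (simp add: sum.cartesian_product)
qed

lemma finite_basis: "finite S \<Longrightarrow> finite (basis d S)"
proof (induction S rule: finite_induct)
  case empty then show ?case by (simp add: basis_empty)
next
  case (insert l S) then show ?case by (simp add: basis_insert_eq)
qed

lemma sum_basis_single: "(\<Sum>c\<in>basis d {l}. f (merge a c {l})) = (\<Sum>v<d l. f (a(l := v)))"
proof -
  have "merge a ((\<lambda>_. 0)(l := v)) {l} = a(l := v)" for v
    by (auto simp: merge_def fun_eq_iff)
  then show ?thesis
    using sum_basis_insert[where l = l and S = "{}" and d = d and f = "\<lambda>c. f (merge a c {l})"]
    by (simp add: basis_empty)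
qed

lemma basis_union_eq:
  assumes "A \<inter> B = {}"
  shows "basis d (A \<union> B) = (\<lambda>(a, b). merge a b B) ` (basis d A \<times> basis d B)"
proof
  show "(\<lambda>(a, b). merge a b B) ` (basis d A \<times> basis d B) \<subseteq> basis d (A \<union> B)"
    using assms by (auto simp: basis_def merge_def)
  show "basis d (A \<union> B) \<subseteq> (\<lambda>(a, b). merge a b B) ` (basis d A \<times> basis d B)"
  proof
    fix c assume c: "c \<in> basis d (A \<union> B)"
    hence "restr c A \<in> basis d A" "restr c B \<in> basis d B"
      by (auto simp: basis_def restr_def)
    moreover have "c = merge (restr c A) (restr c B) B"
      using c by (auto simp: basis_def restr_def merge_def)
    ultimately show "c \<in> (\<lambda>(a, b). merge a b B) ` (basis d A \<times> basis d B)" by force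
  qed
qed

lemma basis_union_inj:
  assumes "A \<inter> B = {}"
  shows "inj_on (\<lambda>(a, b). merge a b B) (basis d A \<times> basis d B)"
proof (rule inj_onI, clarify)
  fix a b a' b'
  assume h: "a \<in> basis d A" "a' \<in> basis d A" "b \<in> basis d B" "b' \<in> basis d B"
    and e: "merge a b B = merge a' b' B"
  have "a x = a' x \<and> b x = b' x" for x
    using fun_cong[OF e, of x] h assms unfolding basis_iff merge_def
    by (cases "x \<in> B"; cases "x \<in> A") auto
  thus "a = a' \<and> b = b'" by auto
qed

lemma sum_basis_union:
  assumes "A \<inter> B = {}"
  shows "(\<Sum>c\<in>basis d (A \<union> B). f c) = (\<Sum>a\<in>basis d A. \<Sum>b\<in>basis d B. f (merge a b B))"
proof -
  have "(\<Sum>c\<in>basis d (A \<union> B). f c) = (\<Sum>(a, b)\<in>basis d A \<times> basis d B. f (merge a b B))"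
    unfolding basis_union_eq[OF assms]
    by (subst sum.reindex[OF basis_union_inj[OF assms]]) (simp add: case_prod_unfold comp_def)
  then show ?thesis by (simp add: sum.cartesian_product)
qed

lemma sum_diagonal:
  assumes "finite A" "a \<in> A" "\<forall>b\<in>A. b \<noteq> a \<longrightarrow> f b = 0"
  shows "(\<Sum>b\<in>A. f b) = f a"
  using assms by (simp add: sum.remove sum.neutral)

lemma psd_diag_nonneg:
  assumes "psd d S M" "finite S" "a \<in> basis d S"
  shows "Im (M a a) = 0 \<and> 0 \<le> Re (M a a)"
proof -
  define v :: "idx \<Rightarrow> complex" where "v = (\<lambda>b. if b = a then 1 else 0)"
  have fin: "finite (basis d S)" using finite_basis[OF assms(2)] .
  have "(\<Sum>x\<in>basis d S. \<Sum>y\<in>basis d S. cnj (v x) * M x y * v y) = M a a"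
    using fin assms(3)
    by (subst sum_diagonal[of _ a]) (auto simp: v_def if_distrib[of "\<lambda>t. _ * t"] cong: if_cong)
  moreover have "let q = (\<Sum>x\<in>basis d S. \<Sum>y\<in>basis d S. cnj (v x) * M x y * v y)
                 in Im q = 0 \<and> 0 \<le> Re q"
    using assms(1) unfolding psd_def by blast
  ultimately show ?thesis by (simp add: Let_def)
qed

lemma psd_diagonalI:
  assumes "finite S" "diagonal d S M" "\<forall>a\<in>basis d S. Im (M a a) = 0 \<and> 0 \<le> Re (M a a)"
  shows "psd d S M"
  unfolding psd_def Let_def
proof
  fix v :: "idx \<Rightarrow> complex"
  have fin: "finite (basis d S)" using finite_basis[OF assms(1)] .
  have "(\<Sum>x\<in>basis d S. \<Sum>y\<in>basis d S. cnj (v x) * M x y * v y)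
      = (\<Sum>x\<in>basis d S. complex_of_real (Re (M x x) * (cmod (v x))\<^sup>2))"
  proof (rule sum.cong[OF refl])
    fix x assume x: "x \<in> basis d S"
    have "M x x = complex_of_real (Re (M x x))" using assms(3) x by (simp add: complex_eq_iff)
    moreover have "cnj (v x) * v x = complex_of_real ((cmod (v x))\<^sup>2)"
      using complex_norm_square[of "v x"] by (simp add: mult.commute)
    ultimately have "cnj (v x) * M x x * v x = complex_of_real (Re (M x x) * (cmod (v x))\<^sup>2)"
      by (metis (no_types, lifting) mult.commute mult.left_commute of_real_mult)
    then show "(\<Sum>y\<in>basis d S. cnj (v x) * M x y * v y) = complex_of_real (Re (M x x) * (cmod (v x))\<^sup>2)"
      using fin x assms(2) unfolding diagonal_def by (subst sum_diagonal[of _ x]) auto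
  qed
  moreover have "0 \<le> (\<Sum>x\<in>basis d S. Re (M x x) * (cmod (v x))\<^sup>2)"
    using assms(3) by (intro sum_nonneg) simp
  ultimately show "Im (\<Sum>x\<in>basis d S. \<Sum>y\<in>basis d S. cnj (v x) * M x y * v y) = 0 \<and>
                   0 \<le> Re (\<Sum>x\<in>basis d S. \<Sum>y\<in>basis d S. cnj (v x) * M x y * v y)"
    by (simp del: of_real_sum add: of_real_sum[symmetric])
qed

lemma inner_op_diagonal:
  assumes "finite S" "diagonal d S A"
  shows "inner_op d S A X = (\<Sum>a\<in>basis d S. cnj (A a a) * X a a)"
  unfolding inner_op_def
  using assms finite_basis[OF assms(1)] unfolding diagonal_def
  by (intro sum.cong refl, subst sum_diagonal) auto

text \<open>If copy c is won with weight u c out of a total weight m c, then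
atleast_mass n k u m is the total weight of winning at least k of the copies 0..n-1
(see sum_strings_atleast).\<close>

primrec atleast_mass :: "nat \<Rightarrow> nat \<Rightarrow> (nat \<Rightarrow> real) \<Rightarrow> (nat \<Rightarrow> real) \<Rightarrow> real" where
  "atleast_mass 0 k u m = (if k = 0 then 1 else 0)"
| "atleast_mass (Suc n) k u m = u n * atleast_mass n (k - 1) u m + (m n - u n) * atleast_mass n k u m"

lemma atleast_mass_cong:
  "(\<forall>c<n. u c = u' c) \<Longrightarrow> (\<forall>c<n. m c = m' c) \<Longrightarrow> atleast_mass n k u m = atleast_mass n k u' m'"
  by (induction n arbitrary: k) auto

lemma atleast_mass_bounds:
  "\<forall>c<n. 0 \<le> u c \<and> u c \<le> m c \<Longrightarrow>
     0 \<le> atleast_mass n k u m \<and> atleast_mass n (Suc k) u m \<le> atleast_mass n k u m"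
proof (induction n arbitrary: k)
  case 0 then show ?case by simp
next
  case (Suc n)
  have u: "0 \<le> u n" "u n \<le> m n" using Suc.prems by auto
  have IH: "0 \<le> atleast_mass n k u m \<and> atleast_mass n (Suc k) u m \<le> atleast_mass n k u m" for k
    using Suc by auto
  have "atleast_mass n k u m \<le> atleast_mass n (k - 1) u m"
    using IH[of "k - 1"] by (cases k) auto
  then show ?case
    using IH[of k] IH[of "k - 1"] u by (auto intro!: add_mono mult_left_mono)
qed

lemma atleast_mass_mono:
  "\<forall>c<n. 0 \<le> u c \<and> u c \<le> u' c \<and> u' c \<le> m c \<Longrightarrow> atleast_mass n k u m \<le> atleast_mass n k u' m"
proof (induction n arbitrary: k)
  case 0 then show ?case by simp
next
  case (Suc n)
  have u: "0 \<le> u n" "u n \<le> u' n" "u' n \<le> m n" using Suc.prems by auto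
  have IH: "atleast_mass n k u m \<le> atleast_mass n k u' m" for k using Suc by auto
  have "\<forall>c<n. 0 \<le> u' c \<and> u' c \<le> m c" using Suc.prems by (meson less_SucI order_trans)
  hence "atleast_mass n k u' m \<le> atleast_mass n (k - 1) u' m"
    using atleast_mass_bounds[of n u' m "k - 1"] by (cases k) auto
  hence "0 \<le> (u' n - u n) * (atleast_mass n (k - 1) u' m - atleast_mass n k u' m)"
    using u by simp
  moreover have "u n * atleast_mass n (k - 1) u m + (m n - u n) * atleast_mass n k u m
      \<le> u n * atleast_mass n (k - 1) u' m + (m n - u n) * atleast_mass n k u' m"
    using IH u by (intro add_mono mult_left_mono) auto
  ultimately show ?case by (simp add: algebra_simps)
qed

lemma binomial_sum_eq_1: "(\<Sum>t=0..n. real (n choose t) * p ^ t * (1 - p) ^ (n - t)) = 1"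
  using binomial_ring[of p "1 - p" n] by (simp add: atMost_atLeast0)

lemma atleast_mass_const:
  "atleast_mass n k (\<lambda>_. p) (\<lambda>_. 1) = (\<Sum>t=k..n. real (n choose t) * p ^ t * (1 - p) ^ (n - t))"
proof (induction n arbitrary: k)
  case 0 then show ?case by simp
next
  case (Suc n)
  let ?E = "\<lambda>n t. real (n choose t) * p ^ t * (1 - p) ^ (n - t)"
  show ?case
  proof (cases k)
    case 0
    have "atleast_mass n 0 (\<lambda>_. p) (\<lambda>_. 1) = 1"
      using Suc.IH[of 0] unfolding binomial_sum_eq_1 .
    then show ?thesis unfolding 0 binomial_sum_eq_1 by simp
  next
    case (Suc k')
    have "(\<Sum>t=Suc k'..Suc n. ?E (Suc n) t) = (\<Sum>s=k'..n. ?E (Suc n) (Suc s))"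
      by (rule sum.shift_bounds_cl_Suc_ivl)
    also have "\<dots> = (\<Sum>s=k'..n. p * ?E n s)
        + (\<Sum>s=k'..n. real (n choose Suc s) * p ^ Suc s * (1 - p) ^ (n - s))"
      by (simp add: sum.distrib[symmetric] algebra_simps)
    also have "(\<Sum>s=k'..n. real (n choose Suc s) * p ^ Suc s * (1 - p) ^ (n - s))
        = (\<Sum>t=Suc k'..Suc n. real (n choose t) * p ^ t * (1 - p) ^ (Suc n - t))"
      by (subst sum.shift_bounds_cl_Suc_ivl) simp
    also have "\<dots> = (\<Sum>t=Suc k'..n. real (n choose t) * p ^ t * (1 - p) ^ (Suc n - t))"
      by (simp add: sum.cl_ivl_Suc)
    also have "\<dots> = (1 - p) * (\<Sum>t=Suc k'..n. ?E n t)"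
      unfolding sum_distrib_left by (rule sum.cong[OF refl]) (auto simp: Suc_diff_le mult_ac)
    finally show ?thesis
      using Suc.IH[of k'] Suc.IH[of "Suc k'"] \<open>k = Suc k'\<close> by (simp add: sum_distrib_left)
  qed
qed

abbreviation count_ones :: "bool list \<Rightarrow> nat" where
  "count_ones bs \<equiv> length (filter id bs)"

lemma strings_atleast_Suc:
  "{bs. length bs = Suc n \<and> k \<le> count_ones bs} =
     (\<lambda>bs. bs @ [True]) ` {bs. length bs = n \<and> k - 1 \<le> count_ones bs}
   \<union> (\<lambda>bs. bs @ [False]) ` {bs. length bs = n \<and> k \<le> count_ones bs}"
proof (intro set_eqI iffI)
  fix bs assume bs: "bs \<in> {bs. length bs = Suc n \<and> k \<le> count_ones bs}"
  then obtain cs b where "bs = cs @ [b]" by (auto simp: length_Suc_conv_rev)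
  with bs show "bs \<in> (\<lambda>bs. bs @ [True]) ` {bs. length bs = n \<and> k - 1 \<le> count_ones bs}
      \<union> (\<lambda>bs. bs @ [False]) ` {bs. length bs = n \<and> k \<le> count_ones bs}"
    by (cases b) auto
qed auto

lemma finite_strings: "finite {bs :: bool list. length bs = n \<and> P bs}"
  using finite_lists_length_eq[of "UNIV :: bool set" n] by (rule finite_subset[rotated]) auto

lemma sum_strings_atleast:
  "(\<Sum>bs\<in>{bs. length bs = n \<and> k \<le> count_ones bs}. \<Prod>c<n. (if bs ! c then u c else w c))
   = atleast_mass n k u (\<lambda>c. u c + w c)"
proof (induction n arbitrary: k)
  case 0
  have "{bs :: bool list. length bs = 0 \<and> k \<le> count_ones bs} = (if k = 0 then {[]} else {})"
    by auto
  then show ?case by simp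
next
  case (Suc n)
  let ?A = "{bs. length bs = n \<and> k - 1 \<le> count_ones bs}"
  let ?B = "{bs. length bs = n \<and> k \<le> count_ones bs}"
  let ?f = "\<lambda>n bs. \<Prod>c<n. (if bs ! c then u c else w c)"
  have "(\<Sum>bs\<in>{bs. length bs = Suc n \<and> k \<le> count_ones bs}. ?f (Suc n) bs)
      = (\<Sum>bs\<in>(\<lambda>bs. bs @ [True]) ` ?A. ?f (Suc n) bs) + (\<Sum>bs\<in>(\<lambda>bs. bs @ [False]) ` ?B. ?f (Suc n) bs)"
    unfolding strings_atleast_Suc by (rule sum.union_disjoint) (auto intro: finite_strings)
  also have "\<dots> = (\<Sum>bs\<in>?A. u n * ?f n bs) + (\<Sum>bs\<in>?B. w n * ?f n bs)"
    by (subst (1 2) sum.reindex)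
      (auto simp: inj_on_def nth_append mult.commute intro!: sum.cong prod.cong)
  finally have eq: "(\<Sum>bs\<in>{bs. length bs = Suc n \<and> k \<le> count_ones bs}. ?f (Suc n) bs)
      = (\<Sum>bs\<in>?A. u n * ?f n bs) + (\<Sum>bs\<in>?B. w n * ?f n bs)" .
  show ?case unfolding eq sum_distrib_left[symmetric] Suc.IH by simp
qed

lemma mem_VX [simp]: "LX c' i \<in> VX c j \<longleftrightarrow> c' = c \<and> 1 \<le> i \<and> i \<le> j" "LY c' i \<notin> VX c j"
  by (auto simp: VX_def)
lemma mem_VY [simp]: "LY c' i \<in> VY c j \<longleftrightarrow> c' = c \<and> 1 \<le> i \<and> i \<le> j" "LX c' i \<notin> VY c j"
  by (auto simp: VY_def)
lemma mem_NX [simp]: "LX c i \<in> NX n j \<longleftrightarrow> c < n \<and> 1 \<le> i \<and> i \<le> j" "LY c i \<notin> NX n j"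
  by (auto simp: NX_def)
lemma mem_NY [simp]: "LY c i \<in> NY n j \<longleftrightarrow> c < n \<and> 1 \<le> i \<and> i \<le> j" "LX c i \<notin> NY n j"
  by (auto simp: NY_def)
lemma mem_LXs [simp]: "LX c i \<in> LXs n j \<longleftrightarrow> c < n \<and> i = j" "LY c i \<notin> LXs n j"
  by (auto simp: LXs_def)
lemma mem_LYs [simp]: "LY c i \<in> LYs n j \<longleftrightarrow> c < n \<and> i = j" "LX c i \<notin> LYs n j"
  by (auto simp: LYs_def)

lemma finite_VX [simp]: "finite (VX c j)"
  by (simp add: VX_def setcompr_eq_image)
lemma finite_VY [simp]: "finite (VY c j)"
  by (simp add: VY_def setcompr_eq_image)
lemma finite_NX [simp]: "finite (NX n j)"
  by (simp add: NX_def)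
lemma finite_NY [simp]: "finite (NY n j)"
  by (simp add: NY_def)
lemma finite_LXs [simp]: "finite (LXs n j)"
  by (simp add: LXs_def setcompr_eq_image)
lemma finite_LYs [simp]: "finite (LYs n j)"
  by (simp add: LYs_def setcompr_eq_image)

lemma set_eq_lab:
  "(\<And>c i. LX c i \<in> A \<longleftrightarrow> LX c i \<in> B) \<Longrightarrow> (\<And>c i. LY c i \<in> A \<longleftrightarrow> LY c i \<in> B) \<Longrightarrow> A = B"
  by (rule set_eqI, case_tac x) auto

lemma disjoint_lab:
  "(\<And>c i. LX c i \<in> A \<Longrightarrow> LX c i \<notin> B) \<Longrightarrow> (\<And>c i. LY c i \<in> A \<Longrightarrow> LY c i \<notin> B) \<Longrightarrow> A \<inter> B = {}"
  by (rule set_eq_lab) auto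

lemma fun_eq_lab:
  "(\<And>c i. f (LX c i) = g (LX c i)) \<Longrightarrow> (\<And>c i. f (LY c i) = g (LY c i)) \<Longrightarrow> f = g"
  by (rule ext, case_tac x) auto

lemma sum_basis_LYs_indicator:
  assumes "\<forall>c<n. g c < d (LY c j)"
  shows "(\<Sum>y\<in>basis d (LYs n j). if \<forall>c<n. y (LY c j) = g c then 1 else 0) = (1 :: 'a :: semiring_1)"
proof -
  define y0 :: idx where "y0 = (\<lambda>l. case l of LY c i \<Rightarrow> if c < n \<and> i = j then g c else 0 | LX c i \<Rightarrow> 0)"
  have y0: "y0 \<in> basis d (LYs n j)"
    unfolding basis_iff
  proof (intro conjI allI ballI impI)
    fix l assume "l \<in> LYs n j" then show "y0 l < d l" using assms by (cases l) (auto simp: y0_def)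
  next
    fix l assume "l \<notin> LYs n j" then show "y0 l = 0" by (cases l) (auto simp: y0_def)
  qed
  have "(\<forall>c<n. y (LY c j) = g c) \<longleftrightarrow> y = y0" if "y \<in> basis d (LYs n j)" for y
  proof
    assume "\<forall>c<n. y (LY c j) = g c"
    then show "y = y0" using that unfolding basis_iff by (intro fun_eq_lab) (auto simp: y0_def)
  qed (simp add: y0_def)
  then have "(\<Sum>y\<in>basis d (LYs n j). if \<forall>c<n. y (LY c j) = g c then 1 else 0)
      = (\<Sum>y\<in>basis d (LYs n j). if y = y0 then 1 else (0 :: 'a))"
    by (intro sum.cong) auto
  also have "\<dots> = 1" using y0 finite_basis[of "LYs n j" d] by simp
  finally show ?thesis .
qed

lemma NY_0 [simp]: "NY n 0 = {}" by (rule set_eq_lab) auto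
lemma NX_1: "NX n 1 = LXs n 1" by (rule set_eq_lab) auto
lemma VX_1: "VX 0 1 = {LX 0 1}" by (rule set_eq_lab) auto
lemma NY_NX_1: "NY 1 j \<union> NX 1 j = VY 0 j \<union> VX 0 j" by (rule set_eq_lab) auto

definition copy_view :: "nat \<Rightarrow> nat \<Rightarrow> idx \<Rightarrow> idx" where
  "copy_view r c a = restr (a \<circ> mv c) (VY 0 r \<union> VX 0 r)"

lemma copyop_copy_view: "copyop r c P a b = P (copy_view r c a) (copy_view r c b)"
  by (simp add: copyop_def copy_view_def)

lemma copy_view_LX [simp]:
  "copy_view r c a (LX c' i) = (if c' = 0 \<and> 1 \<le> i \<and> i \<le> r then a (LX c i) else 0)"
  by (simp add: copy_view_def restr_def)
lemma copy_view_LY [simp]: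
  "copy_view r c a (LY c' i) = (if c' = 0 \<and> 1 \<le> i \<and> i \<le> r then a (LY c i) else 0)"
  by (simp add: copy_view_def restr_def)

lemma copy_view_zero [simp]: "copy_view r c (\<lambda>_. 0) = (\<lambda>_. 0)"
  by (intro fun_eq_lab) auto

lemma copy_view_basis:
  assumes "a \<in> basis (ldim dX dY) (NY n jy \<union> NX n jx)" "c < n" "jy \<le> r" "jx \<le> r"
  shows "copy_view r c a \<in> basis (ldim dX dY) (VY 0 jy \<union> VX 0 jx)"
  unfolding basis_iff
proof (intro conjI allI ballI impI)
  have a: "a l < ldim dX dY l" if "l \<in> NY n jy \<union> NX n jx" for l
    using assms(1) that unfolding basis_iff by blast
  fix l assume l: "l \<in> VY 0 jy \<union> VX 0 jx"
  show "copy_view r c a l < ldim dX dY l"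
  proof (cases l)
    case (LX c' i)
    then show ?thesis using l a[of "LX c i"] assms(2-4) by auto
  next
    case (LY c' i)
    then show ?thesis using l a[of "LY c i"] assms(2-4) by auto
  qed
next
  fix l assume "l \<notin> VY 0 jy \<union> VX 0 jx"
  then show "copy_view r c a l = 0" using assms unfolding basis_iff by (cases l) auto
qed

lemma copy_view_self: "a \<in> basis d (VY 0 r \<union> VX 0 r) \<Longrightarrow> copy_view r 0 a = a"
  unfolding basis_iff by (intro fun_eq_lab) auto

lemma copy_view_merge_LX:
  "1 \<le> j \<Longrightarrow> j \<le> r \<Longrightarrow> c < n \<Longrightarrow>
     copy_view r c (merge a z (LXs n j)) = (copy_view r c a)(LX 0 j := z (LX c j))"
  by (intro fun_eq_lab) (auto simp: merge_def)

lemma copy_view_merge_LY: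
  "1 \<le> j \<Longrightarrow> j \<le> r \<Longrightarrow> c < n \<Longrightarrow>
     copy_view r c (merge a z (LYs n j)) = (copy_view r c a)(LY 0 j := z (LY c j))"
  by (intro fun_eq_lab) (auto simp: merge_def)

text \<open>Summing out the round-j questions of all copies factorises across the copies,
because atleast_mass is affine in the weights of each copy.\<close>

lemma sum_layer_atleast_mass:
  "(\<Sum>z\<in>basis (ldim dX dY) (LXs n j).
      atleast_mass n k (\<lambda>c. f c (z (LX c j))) (\<lambda>c. g c (z (LX c j))))
   = atleast_mass n k (\<lambda>c. \<Sum>v<dX j. f c v) (\<lambda>c. \<Sum>v<dX j. g c v)"
proof (induction n arbitrary: k)
  case 0
  have "LXs 0 j = {}" by (rule set_eq_lab) auto
  then show ?case by (simp add: basis_empty)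
next
  case (Suc n)
  have e: "LXs (Suc n) j = insert (LX n j) (LXs n j)" by (rule set_eq_lab) auto
  let ?u = "\<lambda>z c. f c (z (LX c j))" and ?m = "\<lambda>z c. g c (z (LX c j))"
  have upd: "atleast_mass n k' (?u (z(LX n j := v))) (?m (z(LX n j := v)))
      = atleast_mass n k' (?u z) (?m z)" for z v k'
    by (intro atleast_mass_cong) simp_all
  have "(\<Sum>z\<in>basis (ldim dX dY) (LXs (Suc n) j). atleast_mass (Suc n) k (?u z) (?m z))
      = (\<Sum>z\<in>basis (ldim dX dY) (LXs n j). \<Sum>v<dX j.
          f n v * atleast_mass n (k - 1) (?u z) (?m z)
        + (g n v - f n v) * atleast_mass n k (?u z) (?m z))"
    unfolding e by (subst sum_basis_insert) (simp_all del: fun_upd_apply add: upd fun_upd_same)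
  also have "\<dots> = (\<Sum>z\<in>basis (ldim dX dY) (LXs n j).
        (\<Sum>v<dX j. f n v) * atleast_mass n (k - 1) (?u z) (?m z)
      + ((\<Sum>v<dX j. g n v) - (\<Sum>v<dX j. f n v)) * atleast_mass n k (?u z) (?m z))"
    by (simp add: sum.distrib sum_distrib_right sum_subtractf left_diff_distrib)
  finally show ?case
    by (simp add: sum.distrib sum_distrib_left[symmetric] Suc.IH)
qed

lemma Max_image_bounds:
  assumes "finite A" "A \<noteq> {}" "\<And>y. y \<in> A \<Longrightarrow> 0 \<le> f y \<and> f y \<le> (M :: real)"
  shows "0 \<le> Max (f ` A) \<and> Max (f ` A) \<le> M"
proof -
  obtain y where "y \<in> A" using assms(2) by blast
  then have "0 \<le> Max (f ` A)" using assms(1,3) by (meson Max_ge finite_imageI image_eqI order_trans)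
  then show ?thesis using assms by (simp add: Max_le_iff)
qed

text \<open>Only the diagonal entries of the R_j ever enter the argument, so their
diagonality is not needed.\<close>

locale diagonal_game =
  fixes dX dY :: "nat \<Rightarrow> nat" and r :: nat and P0 P1 :: op and R :: "nat \<Rightarrow> op"
  assumes r_pos: "1 \<le> r"
    and dY_pos: "\<forall>j\<in>{1..r}. 0 < dY j"
    and verifier: "is_verifier dX dY r P0 P1 R"
    and diagonal_P0: "diagonal (ldim dX dY) (VY 0 r \<union> VX 0 r) P0"
    and diagonal_P1: "diagonal (ldim dX dY) (VY 0 r \<union> VX 0 r) P1"
begin

abbreviation "dims \<equiv> ldim dX dY"
abbreviation "Ans1 j \<equiv> VY 0 j \<union> VX 0 j"
abbreviation "Qst1 j \<equiv> VY 0 (j - 1) \<union> VX 0 j"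

lemma verifier_conds:
  "psd dims (Ans1 r) P0" "psd dims (Ans1 r) P1" "density dims (VX 0 1) (R 1)"
  "\<forall>j\<in>{1..<r}. op_eq dims (Ans1 j) (ptrace dims {LX 0 (j + 1)} (R (j + 1)))
      (tens {LY 0 j} idop (Qst1 j) (R j))"
  "op_eq dims (Ans1 r) (\<lambda>a b. P0 a b + P1 a b) (tens {LY 0 r} idop (Qst1 r) (R r))"
  using verifier unfolding is_verifier_def Let_def by auto

lemma P_diag_nonneg:
  assumes "h \<in> basis dims (Ans1 r)"
  shows "Im (P0 h h) = 0 \<and> 0 \<le> Re (P0 h h)" "Im (P1 h h) = 0 \<and> 0 \<le> Re (P1 h h)"
  using verifier_conds(1,2) assms psd_diag_nonneg by auto

lemma P0_plus_P1:
  "h \<in> basis dims (Ans1 r) \<Longrightarrow> P0 h h + P1 h h = R r (restr h (Qst1 r)) (restr h (Qst1 r))"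
  using verifier_conds(5) unfolding op_eq_def by (simp add: tens_def idop_def)

lemma R_trace_step:
  assumes "1 \<le> j" "j < r" "h \<in> basis dims (Ans1 j)"
  shows "(\<Sum>x<dX (Suc j). R (Suc j) (h(LX 0 (Suc j) := x)) (h(LX 0 (Suc j) := x)))
         = R j (restr h (Qst1 j)) (restr h (Qst1 j))"
proof -
  have "ptrace dims {LX 0 (j + 1)} (R (j + 1)) h h = tens {LY 0 j} idop (Qst1 j) (R j) h h"
    using verifier_conds(4) assms unfolding op_eq_def by auto
  then show ?thesis
    unfolding ptrace_def using sum_basis_single[where f = "\<lambda>g. R (Suc j) g g" and l = "LX 0 (Suc j)"]
    by (simp add: tens_def idop_def)
qed

lemma R1_trace: "(\<Sum>x<dX 1. R 1 ((\<lambda>_. 0)(LX 0 1 := x)) ((\<lambda>_. 0)(LX 0 1 := x))) = 1"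
proof -
  have "merge (\<lambda>_. 0) a {LX 0 1} = a" if "a \<in> basis dims {LX 0 1}" for a
    using that unfolding basis_iff by (auto simp: merge_def fun_eq_iff)
  then have "(\<Sum>a\<in>basis dims (VX 0 1). R 1 a a)
      = (\<Sum>a\<in>basis dims {LX 0 1}. R 1 (merge (\<lambda>_. 0) a {LX 0 1}) (merge (\<lambda>_. 0) a {LX 0 1}))"
    unfolding VX_1 by (intro sum.cong) auto
  also have "\<dots> = (\<Sum>x<dX 1. R 1 ((\<lambda>_. 0)(LX 0 1 := x)) ((\<lambda>_. 0)(LX 0 1 := x)))"
    using sum_basis_single[where f = "\<lambda>g. R 1 g g" and d = dims and l = "LX 0 1" and a = "\<lambda>_. 0"]
    by simp
  finally show ?thesis using verifier_conds(3) unfolding density_def by simp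
qed

lemma Ans1_eq: "1 \<le> j \<Longrightarrow> Ans1 j = insert (LY 0 j) (Qst1 j)"
  by (rule set_eq_lab) auto

lemma Qst1_Suc: "Qst1 (Suc j) = insert (LX 0 (Suc j)) (Ans1 j)"
  by (rule set_eq_lab) auto

text \<open>Backward induction for a single copy. weight j h is the weight that R j gives to
the transcript h of the first j rounds (questions of rounds 1..j, answers of rounds 1..j-1).
opt_tail m h is the optimal winning weight with m rounds still to play, maximising over the
answers and summing over the questions; opt_answered j and opt_asked j are its values once
round j has been answered, resp. asked.\<close>

definition weight :: "nat \<Rightarrow> idx \<Rightarrow> real" where
  "weight j h = Re (R j (restr h (Qst1 j)) (restr h (Qst1 j)))"

primrec opt_tail :: "nat \<Rightarrow> idx \<Rightarrow> real" where
  "opt_tail 0 h = Re (P1 h h)"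
| "opt_tail (Suc m) h = (\<Sum>x<dX (r - m).
     Max ((\<lambda>y. opt_tail m (h(LX 0 (r - m) := x, LY 0 (r - m) := y))) ` {..<dY (r - m)}))"

definition opt_answered :: "nat \<Rightarrow> idx \<Rightarrow> real" where
  "opt_answered j h = opt_tail (r - j) h"

definition opt_asked :: "nat \<Rightarrow> idx \<Rightarrow> real" where
  "opt_asked j h = Max ((\<lambda>y. opt_answered j (h(LY 0 j := y))) ` {..<dY j})"

lemma opt_answered_last: "opt_answered r h = Re (P1 h h)"
  by (simp add: opt_answered_def)

lemma opt_answered_step:
  assumes "j < r"
  shows "opt_answered j h = (\<Sum>x<dX (Suc j). opt_asked (Suc j) (h(LX 0 (Suc j) := x)))"
proof -
  have "r - j = Suc (r - Suc j)" "r - (r - Suc j) = Suc j" using assms by auto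
  then show ?thesis unfolding opt_answered_def opt_asked_def by simp
qed

lemma weight_upd_LY: "weight j (h(LY 0 j := v)) = weight j h"
proof -
  have "restr (h(LY 0 j := v)) (Qst1 j) = restr h (Qst1 j)"
    by (rule fun_eq_lab; cases "j = 0"; auto simp: restr_def)
  then show ?thesis unfolding weight_def by simp
qed

lemma weight_step:
  assumes "1 \<le> j" "j < r" "h \<in> basis dims (Ans1 j)"
  shows "(\<Sum>x<dX (Suc j). weight (Suc j) (h(LX 0 (Suc j) := x))) = weight j h"
proof -
  have "restr (h(LX 0 (Suc j) := x)) (Qst1 (Suc j)) = h(LX 0 (Suc j) := x)" for x
    using assms(3) unfolding Qst1_Suc basis_iff by (auto simp: restr_def fun_eq_iff)
  then show ?thesis
    using R_trace_step[OF assms] unfolding weight_def by (simp flip: Re_sum)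
qed

lemma opt_asked_bounds_if:
  assumes "1 \<le> j" "j \<le> r" "h \<in> basis dims (Qst1 j)"
    and "\<And>h'. h' \<in> basis dims (Ans1 j) \<Longrightarrow> 0 \<le> opt_answered j h' \<and> opt_answered j h' \<le> weight j h'"
  shows "0 \<le> opt_asked j h \<and> opt_asked j h \<le> weight j h"
  unfolding opt_asked_def
proof (rule Max_image_bounds)
  show "{..<dY j} \<noteq> {}" using dY_pos assms(1,2) by auto
  fix y assume "y \<in> {..<dY j}"
  then have "h(LY 0 j := y) \<in> basis dims (Ans1 j)"
    unfolding Ans1_eq[OF assms(1)] using assms(3) by (intro basis_upd) auto
  then show "0 \<le> opt_answered j (h(LY 0 j := y)) \<and> opt_answered j (h(LY 0 j := y)) \<le> weight j h"
    using assms(4) weight_upd_LY by metis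
qed simp

lemma opt_answered_bounds:
  assumes "1 \<le> j" "j \<le> r" "h \<in> basis dims (Ans1 j)"
  shows "0 \<le> opt_answered j h \<and> opt_answered j h \<le> weight j h"
  using assms(2,1,3)
proof (induction j arbitrary: h rule: inc_induct)
  case base
  then have "weight r h = Re (P0 h h) + Re (P1 h h)"
    unfolding weight_def using P0_plus_P1 by (metis plus_complex.sel(1))
  then show ?case using P_diag_nonneg[OF base.prems(2)] by (simp add: opt_answered_last)
next
  case (step j)
  have asked: "0 \<le> opt_asked (Suc j) (h(LX 0 (Suc j) := x))
      \<and> opt_asked (Suc j) (h(LX 0 (Suc j) := x)) \<le> weight (Suc j) (h(LX 0 (Suc j) := x))"
    if "x < dX (Suc j)" for x
  proof (rule opt_asked_bounds_if)
    show "h(LX 0 (Suc j) := x) \<in> basis dims (Qst1 (Suc j))"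
      unfolding Qst1_Suc using step.prems that by (intro basis_upd) auto
  qed (use step in auto)
  show ?case
    unfolding opt_answered_step[OF step.hyps(2)]
      weight_step[OF step.prems(1) step.hyps(2) step.prems(2), symmetric]
    using asked by (auto intro!: sum_nonneg sum_mono)
qed

lemma opt_asked_bounds:
  "1 \<le> j \<Longrightarrow> j \<le> r \<Longrightarrow> h \<in> basis dims (Qst1 j) \<Longrightarrow> 0 \<le> opt_asked j h \<and> opt_asked j h \<le> weight j h"
  by (intro opt_asked_bounds_if opt_answered_bounds)

lemma opt_asked_ge: "y < dY j \<Longrightarrow> opt_answered j (h(LY 0 j := y)) \<le> opt_asked j h"
  unfolding opt_asked_def by (intro Max_ge) auto

definition best_answer :: "nat \<Rightarrow> idx \<Rightarrow> nat" where
  "best_answer j h = (SOME y. y < dY j \<and>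
     opt_answered j ((restr h (Qst1 j))(LY 0 j := y)) = opt_asked j (restr h (Qst1 j)))"

lemma best_answer:
  assumes "1 \<le> j" "j \<le> r" "h \<in> basis dims (Qst1 j)"
  shows "best_answer j h < dY j" "opt_answered j (h(LY 0 j := best_answer j h)) = opt_asked j h"
proof -
  have "opt_asked j h \<in> (\<lambda>y. opt_answered j (h(LY 0 j := y))) ` {..<dY j}"
    unfolding opt_asked_def using dY_pos assms(1,2) by (intro Max_in) auto
  then have "\<exists>y. y < dY j \<and> opt_answered j (h(LY 0 j := y)) = opt_asked j h" by auto
  from someI_ex[OF this]
  show "best_answer j h < dY j" "opt_answered j (h(LY 0 j := best_answer j h)) = opt_asked j h"
    unfolding best_answer_def restr_basis_self[OF assms(3)] by auto
qed

lemma best_answer_restr: "restr h (Qst1 j) = restr h' (Qst1 j) \<Longrightarrow> best_answer j h = best_answer j h'"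
  unfolding best_answer_def by simp

abbreviation "Ans n j \<equiv> NY n j \<union> NX n j"
abbreviation "Qst n j \<equiv> NY n (j - 1) \<union> NX n j"

definition strategy_seq :: "nat \<Rightarrow> (nat \<Rightarrow> op) \<Rightarrow> bool" where
  "strategy_seq n Xs \<longleftrightarrow> (\<forall>j\<in>{1..r}. psd dims (Ans n j) (Xs j)) \<and>
      op_eq dims (NX n 1) (ptrace dims (LYs n 1) (Xs 1)) idop \<and>
      (\<forall>j\<in>{2..r}. op_eq dims (Qst n j) (ptrace dims (LYs n j) (Xs j))
          (tens (Ans n (j - 1)) (Xs (j - 1)) (LXs n j) idop))"

lemma is_strategy_iff: "is_strategy dX dY r n X \<longleftrightarrow> (\<exists>Xs. strategy_seq n Xs \<and> op_eq dims (Ans n r) (Xs r) X)"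
  unfolding is_strategy_def strategy_seq_def Let_def by blast

lemma Ans_split: "1 \<le> j \<Longrightarrow> Ans n j = Qst n j \<union> LYs n j"
  by (rule set_eq_lab) auto
lemma Qst_LYs_disjoint: "Qst n j \<inter> LYs n j = {}"
  by (rule disjoint_lab) auto
lemma Qst_Suc_split: "Qst n (Suc j) = Ans n j \<union> LXs n (Suc j)"
  by (rule set_eq_lab) auto
lemma Ans_LXs_disjoint: "Ans n j \<inter> LXs n (Suc j) = {}"
  by (rule disjoint_lab) auto

lemma strategy_diag_nonneg:
  "strategy_seq n Xs \<Longrightarrow> 1 \<le> j \<Longrightarrow> j \<le> r \<Longrightarrow> a \<in> basis dims (Ans n j) \<Longrightarrow>
     Im (Xs j a a) = 0 \<and> 0 \<le> Re (Xs j a a)"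
  unfolding strategy_seq_def by (intro psd_diag_nonneg[of dims "Ans n j"]) auto

definition prev_mass :: "nat \<Rightarrow> (nat \<Rightarrow> op) \<Rightarrow> nat \<Rightarrow> idx \<Rightarrow> real" where
  "prev_mass n Xs j a =
     (if j = 1 then 1 else Re (Xs (j - 1) (restr a (Ans n (j - 1))) (restr a (Ans n (j - 1)))))"

lemma strategy_trace_diag:
  assumes "strategy_seq n Xs" "1 \<le> j" "j \<le> r" "a \<in> basis dims (Qst n j)"
  shows "(\<Sum>y\<in>basis dims (LYs n j). Re (Xs j (merge a y (LYs n j)) (merge a y (LYs n j))))
         = prev_mass n Xs j a"
proof -
  have "(\<Sum>y\<in>basis dims (LYs n j). Re (Xs j (merge a y (LYs n j)) (merge a y (LYs n j))))
      = Re (ptrace dims (LYs n j) (Xs j) a a)" unfolding ptrace_def by simp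
  also have "\<dots> = prev_mass n Xs j a"
  proof (cases "j = 1")
    case True
    then have "ptrace dims (LYs n j) (Xs j) a a = idop a a"
      using assms unfolding strategy_seq_def op_eq_def by simp
    then show ?thesis using True by (simp add: idop_def prev_mass_def)
  next
    case False
    then have "ptrace dims (LYs n j) (Xs j) a a = tens (Ans n (j - 1)) (Xs (j - 1)) (LXs n j) idop a a"
      using assms unfolding strategy_seq_def op_eq_def by auto
    then show ?thesis using False by (simp add: tens_def idop_def prev_mass_def)
  qed
  finally show ?thesis .
qed

text \<open>The quantities propagated backwards through the rounds: the weight of the
n-fold transcript under the strategy, times the probability of winning at least k
copies when every copy continues optimally from its current transcript.\<close>

definition bound_answered :: "nat \<Rightarrow> nat \<Rightarrow> (nat \<Rightarrow> op) \<Rightarrow> nat \<Rightarrow> real" where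
  "bound_answered n k Xs j = (\<Sum>a\<in>basis dims (Ans n j). Re (Xs j a a) *
     atleast_mass n k (\<lambda>c. opt_answered j (copy_view r c a)) (\<lambda>c. weight j (copy_view r c a)))"

definition bound_asked :: "nat \<Rightarrow> nat \<Rightarrow> (nat \<Rightarrow> op) \<Rightarrow> nat \<Rightarrow> real" where
  "bound_asked n k Xs j = (\<Sum>a\<in>basis dims (Qst n j). prev_mass n Xs j a *
     atleast_mass n k (\<lambda>c. opt_asked j (copy_view r c a)) (\<lambda>c. weight j (copy_view r c a)))"

lemma bound_answered_split:
  assumes "1 \<le> j" "j \<le> r"
  shows "bound_answered n k Xs j = (\<Sum>a\<in>basis dims (Qst n j). \<Sum>y\<in>basis dims (LYs n j).
     Re (Xs j (merge a y (LYs n j)) (merge a y (LYs n j))) *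
     atleast_mass n k (\<lambda>c. opt_answered j ((copy_view r c a)(LY 0 j := y (LY c j))))
                      (\<lambda>c. weight j (copy_view r c a)))"
  unfolding bound_answered_def Ans_split[OF assms(1)] sum_basis_union[OF Qst_LYs_disjoint]
  using assms
  by (intro sum.cong refl arg_cong2[where f = "(*)"] atleast_mass_cong)
    (simp_all add: copy_view_merge_LY weight_upd_LY)

lemma bound_asked_split:
  assumes "strategy_seq n Xs" "1 \<le> j" "j \<le> r"
  shows "bound_asked n k Xs j = (\<Sum>a\<in>basis dims (Qst n j). \<Sum>y\<in>basis dims (LYs n j).
     Re (Xs j (merge a y (LYs n j)) (merge a y (LYs n j))) *
     atleast_mass n k (\<lambda>c. opt_asked j (copy_view r c a)) (\<lambda>c. weight j (copy_view r c a)))"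
  unfolding bound_asked_def
  by (intro sum.cong refl) (simp add: sum_distrib_right[symmetric] strategy_trace_diag[OF assms])

text \<open>Answering round j optimally in every copy can only help.\<close>

lemma bound_answered_le_asked:
  assumes "strategy_seq n Xs" "1 \<le> j" "j \<le> r"
  shows "bound_answered n k Xs j \<le> bound_asked n k Xs j"
proof -
  have mass: "atleast_mass n k (\<lambda>c. opt_answered j ((copy_view r c a)(LY 0 j := y (LY c j))))
      (\<lambda>c. weight j (copy_view r c a))
    \<le> atleast_mass n k (\<lambda>c. opt_asked j (copy_view r c a)) (\<lambda>c. weight j (copy_view r c a))"
    if a: "a \<in> basis dims (Qst n j)" and y: "y \<in> basis dims (LYs n j)" for a y
  proof (intro atleast_mass_mono allI impI)
    fix c assume c: "c < n"
    have a': "copy_view r c a \<in> basis dims (Qst1 j)"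
      using assms(3) a c by (intro copy_view_basis) auto
    have yc: "y (LY c j) < dY j" using y c unfolding basis_iff by (metis ldim.simps(2) mem_LYs(1))
    then have "(copy_view r c a)(LY 0 j := y (LY c j)) \<in> basis dims (Ans1 j)"
      unfolding Ans1_eq[OF assms(2)] using a' by (intro basis_upd) auto
    then show "0 \<le> opt_answered j ((copy_view r c a)(LY 0 j := y (LY c j)))
      \<and> opt_answered j ((copy_view r c a)(LY 0 j := y (LY c j))) \<le> opt_asked j (copy_view r c a)
      \<and> opt_asked j (copy_view r c a) \<le> weight j (copy_view r c a)"
      using opt_answered_bounds assms(2,3) opt_asked_ge[OF yc] opt_asked_bounds[OF assms(2,3) a']
      by blast
  qed
  have nonneg: "0 \<le> Re (Xs j (merge a y (LYs n j)) (merge a y (LYs n j)))"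
    if "a \<in> basis dims (Qst n j)" "y \<in> basis dims (LYs n j)" for a y
  proof -
    have "merge a y (LYs n j) \<in> basis dims (Ans n j)"
      unfolding Ans_split[OF assms(2)] using that by (rule merge_basis)
    then show ?thesis using strategy_diag_nonneg[OF assms] by blast
  qed
  show ?thesis
    unfolding bound_answered_split[OF assms(2,3)] bound_asked_split[OF assms]
    by (intro sum_mono mult_left_mono mass nonneg)
qed

lemma bound_answered_eq_asked:
  assumes "strategy_seq n Xs" "1 \<le> j" "j \<le> r"
    and best: "\<And>a y c. a \<in> basis dims (Qst n j) \<Longrightarrow> y \<in> basis dims (LYs n j) \<Longrightarrow> c < n \<Longrightarrow>
      Re (Xs j (merge a y (LYs n j)) (merge a y (LYs n j))) \<noteq> 0 \<Longrightarrow>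
      y (LY c j) = best_answer j (copy_view r c a)"
  shows "bound_answered n k Xs j = bound_asked n k Xs j"
  unfolding bound_answered_split[OF assms(2,3)] bound_asked_split[OF assms(1-3)]
proof (intro sum.cong refl)
  fix a y assume a: "a \<in> basis dims (Qst n j)" and y: "y \<in> basis dims (LYs n j)"
  have "atleast_mass n k (\<lambda>c. opt_answered j ((copy_view r c a)(LY 0 j := y (LY c j))))
      (\<lambda>c. weight j (copy_view r c a))
    = atleast_mass n k (\<lambda>c. opt_asked j (copy_view r c a)) (\<lambda>c. weight j (copy_view r c a))"
    if "Re (Xs j (merge a y (LYs n j)) (merge a y (LYs n j))) \<noteq> 0"
  proof (intro atleast_mass_cong allI impI refl)
    fix c assume c: "c < n"
    have "copy_view r c a \<in> basis dims (Qst1 j)"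
      using assms(3) a c by (intro copy_view_basis) auto
    then show "opt_answered j ((copy_view r c a)(LY 0 j := y (LY c j))) = opt_asked j (copy_view r c a)"
      using best[OF a y c that] best_answer[OF assms(2,3)] by simp
  qed
  then show "Re (Xs j (merge a y (LYs n j)) (merge a y (LYs n j))) *
      atleast_mass n k (\<lambda>c. opt_answered j ((copy_view r c a)(LY 0 j := y (LY c j))))
        (\<lambda>c. weight j (copy_view r c a))
    = Re (Xs j (merge a y (LYs n j)) (merge a y (LYs n j))) *
      atleast_mass n k (\<lambda>c. opt_asked j (copy_view r c a)) (\<lambda>c. weight j (copy_view r c a))"
    by (cases "Re (Xs j (merge a y (LYs n j)) (merge a y (LYs n j))) = 0") auto
qed

text \<open>Summing out the round-(j+1) questions turns the bound before round j+1 into the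
bound after round j, because the strategy and each single-copy value are consistent
with their own marginals.\<close>

lemma bound_asked_Suc_split:
  assumes "1 \<le> j" "j < r"
  shows "bound_asked n k Xs (Suc j) = (\<Sum>a\<in>basis dims (Ans n j). Re (Xs j a a) *
    (\<Sum>z\<in>basis dims (LXs n (Suc j)).
      atleast_mass n k (\<lambda>c. opt_asked (Suc j) ((copy_view r c a)(LX 0 (Suc j) := z (LX c (Suc j)))))
                       (\<lambda>c. weight (Suc j) ((copy_view r c a)(LX 0 (Suc j) := z (LX c (Suc j)))))))"
  unfolding bound_asked_def Qst_Suc_split sum_basis_union[OF Ans_LXs_disjoint]
proof (intro sum.cong refl)
  fix a assume a: "a \<in> basis dims (Ans n j)"
  let ?L = "LXs n (Suc j)"
  have "prev_mass n Xs (Suc j) (merge a z ?L) = Re (Xs j a a)" for z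
    using assms merge_restr[OF a Ans_LXs_disjoint] by (simp add: prev_mass_def)
  then show "(\<Sum>z\<in>basis dims ?L. prev_mass n Xs (Suc j) (merge a z ?L) *
      atleast_mass n k (\<lambda>c. opt_asked (Suc j) (copy_view r c (merge a z ?L)))
                       (\<lambda>c. weight (Suc j) (copy_view r c (merge a z ?L))))
    = Re (Xs j a a) * (\<Sum>z\<in>basis dims ?L.
      atleast_mass n k (\<lambda>c. opt_asked (Suc j) ((copy_view r c a)(LX 0 (Suc j) := z (LX c (Suc j)))))
                       (\<lambda>c. weight (Suc j) ((copy_view r c a)(LX 0 (Suc j) := z (LX c (Suc j))))))"
    unfolding sum_distrib_left using assms
    by (intro sum.cong refl arg_cong2[where f = "(*)"] atleast_mass_cong)
      (simp_all add: copy_view_merge_LX)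
qed

lemma sum_layer_asked_eq_answered:
  assumes "1 \<le> j" "j < r" "a \<in> basis dims (Ans n j)"
  shows "(\<Sum>z\<in>basis dims (LXs n (Suc j)).
      atleast_mass n k (\<lambda>c. opt_asked (Suc j) ((copy_view r c a)(LX 0 (Suc j) := z (LX c (Suc j)))))
                       (\<lambda>c. weight (Suc j) ((copy_view r c a)(LX 0 (Suc j) := z (LX c (Suc j))))))
    = atleast_mass n k (\<lambda>c. opt_answered j (copy_view r c a)) (\<lambda>c. weight j (copy_view r c a))"
proof -
  let ?upd = "\<lambda>c v. (copy_view r c a)(LX 0 (Suc j) := v)"
  have "(\<Sum>v<dX (Suc j). opt_asked (Suc j) (?upd c v)) = opt_answered j (copy_view r c a)" for c
    using opt_answered_step assms by simp
  moreover have "(\<Sum>v<dX (Suc j). weight (Suc j) (?upd c v)) = weight j (copy_view r c a)"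
    if "c < n" for c
    using assms that by (intro weight_step copy_view_basis) auto
  ultimately show ?thesis
    by (subst sum_layer_atleast_mass[where f = "\<lambda>c v. opt_asked (Suc j) (?upd c v)"
          and g = "\<lambda>c v. weight (Suc j) (?upd c v)"]) (simp add: atleast_mass_cong)
qed

lemma bound_asked_Suc:
  assumes "1 \<le> j" "j < r"
  shows "bound_asked n k Xs (Suc j) = bound_answered n k Xs j"
  unfolding bound_asked_Suc_split[OF assms] bound_answered_def
  using sum_layer_asked_eq_answered[OF assms] by simp

definition opt_value :: real where
  "opt_value = (\<Sum>v<dX 1. opt_asked 1 ((\<lambda>_. 0)(LX 0 1 := v)))"

lemma bound_asked_1: "bound_asked n k Xs 1 = atleast_mass n k (\<lambda>_. opt_value) (\<lambda>_. 1)"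
proof -
  let ?e = "\<lambda>v. (\<lambda>_. 0)(LX 0 1 := v)"
  have "bound_asked n k Xs 1 = (\<Sum>a\<in>basis dims (LXs n 1).
      atleast_mass n k (\<lambda>c. opt_asked 1 (?e (a (LX c 1)))) (\<lambda>c. weight 1 (?e (a (LX c 1)))))"
    unfolding bound_asked_def NX_1 diff_self_eq_0 NY_0 Un_empty_left
  proof (intro sum.cong refl)
    fix a assume "a \<in> basis dims (LXs n 1)"
    then have "merge (\<lambda>_. 0) a (LXs n 1) = a" unfolding basis_iff by (auto simp: merge_def fun_eq_iff)
    then have "copy_view r c a = ?e (a (LX c 1))" if "c < n" for c
      using copy_view_merge_LX[of 1 r c n "\<lambda>_. 0" a] r_pos that by simp
    then show "prev_mass n Xs 1 a * atleast_mass n k (\<lambda>c. opt_asked 1 (copy_view r c a))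
        (\<lambda>c. weight 1 (copy_view r c a))
      = atleast_mass n k (\<lambda>c. opt_asked 1 (?e (a (LX c 1)))) (\<lambda>c. weight 1 (?e (a (LX c 1))))"
      by (simp add: prev_mass_def, intro atleast_mass_cong allI impI; simp)
  qed
  also have "\<dots> = atleast_mass n k (\<lambda>_. opt_value) (\<lambda>_. \<Sum>v<dX 1. weight 1 (?e v))"
    unfolding opt_value_def by (rule sum_layer_atleast_mass)
  also have "(\<Sum>v<dX 1. weight 1 (?e v)) = 1"
  proof -
    have "restr (?e v) (Qst1 1) = ?e v" for v by (rule fun_eq_lab) (auto simp: restr_def)
    then show ?thesis using R1_trace unfolding weight_def by (simp flip: Re_sum)
  qed
  finally show ?thesis .
qed

lemma bound_answered_le_opt:
  assumes "strategy_seq n Xs" "1 \<le> j" "j \<le> r"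
  shows "bound_answered n k Xs j \<le> atleast_mass n k (\<lambda>_. opt_value) (\<lambda>_. 1)"
  using assms(2,3)
proof (induction j rule: nat_induct_at_least)
  case base
  show ?case using bound_answered_le_asked[OF assms(1) order.refl r_pos] unfolding bound_asked_1 .
next
  case (Suc j)
  have "bound_answered n k Xs (Suc j) \<le> bound_asked n k Xs (Suc j)"
    using bound_answered_le_asked[OF assms(1) _ Suc.prems] by simp
  with Suc show ?case by (simp add: bound_asked_Suc)
qed

lemma bound_answered_eq_opt:
  assumes "strategy_seq n Xs" "1 \<le> j" "j \<le> r"
    and best: "\<And>j a y c. 1 \<le> j \<Longrightarrow> j \<le> r \<Longrightarrow> a \<in> basis dims (Qst n j) \<Longrightarrow>
      y \<in> basis dims (LYs n j) \<Longrightarrow> c < n \<Longrightarrow>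
      Re (Xs j (merge a y (LYs n j)) (merge a y (LYs n j))) \<noteq> 0 \<Longrightarrow>
      y (LY c j) = best_answer j (copy_view r c a)"
  shows "bound_answered n k Xs j = atleast_mass n k (\<lambda>_. opt_value) (\<lambda>_. 1)"
proof -
  have eq: "bound_answered n k Xs j = bound_asked n k Xs j" if "1 \<le> j" "j \<le> r" for j
    by (rule bound_answered_eq_asked[OF assms(1) that], rule best[OF that])
  show ?thesis
    using assms(2,3)
  proof (induction j rule: nat_induct_at_least)
    case base
    show ?case using eq[OF order.refl r_pos] unfolding bound_asked_1 .
  next
    case (Suc j)
    then show ?case using eq[of "Suc j"] by (simp add: bound_asked_Suc)
  qed
qed

lemma copy_views_differ:
  assumes "a \<in> basis dims (Ans n r)" "b \<in> basis dims (Ans n r)" "a \<noteq> b"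
  shows "\<exists>c<n. copy_view r c a \<noteq> copy_view r c b"
proof -
  obtain l where l: "a l \<noteq> b l" using assms(3) by auto
  then have "l \<in> Ans n r" using assms(1,2) unfolding basis_iff by metis
  with l show ?thesis
  proof (cases l)
    case (LX c i)
    then show ?thesis using l \<open>l \<in> Ans n r\<close> by (metis copy_view_LX mem_NX(1) mem_NY(2) Un_iff)
  next
    case (LY c i)
    then show ?thesis using l \<open>l \<in> Ans n r\<close> by (metis copy_view_LY mem_NY(1) mem_NX(2) Un_iff)
  qed
qed

lemma prodop_offdiag:
  assumes "length bs = n" "a \<in> basis dims (Ans n r)" "b \<in> basis dims (Ans n r)" "a \<noteq> b"
  shows "prodop r P0 P1 bs a b = 0"
proof -
  obtain c where c: "c < n" "copy_view r c a \<noteq> copy_view r c b"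
    using copy_views_differ[OF assms(2-4)] by blast
  have "copy_view r c a \<in> basis dims (Ans1 r)" "copy_view r c b \<in> basis dims (Ans1 r)"
    using assms c by (intro copy_view_basis; simp)+
  then have "copyop r c (if bs ! c then P1 else P0) a b = 0"
    unfolding copyop_copy_view using diagonal_P0 diagonal_P1 c(2) unfolding diagonal_def by auto
  then have "\<exists>c\<in>{..<length bs}. copyop r c (if bs ! c then P1 else P0) a b = 0"
    using c(1) assms(1) by blast
  then show ?thesis unfolding prodop_def by (rule prod_zero[OF finite_lessThan])
qed

lemma prodop_diag:
  assumes "length bs = n" "a \<in> basis dims (Ans n r)"
  shows "prodop r P0 P1 bs a a = complex_of_real (\<Prod>c<n.
    if bs ! c then Re (P1 (copy_view r c a) (copy_view r c a))
    else Re (P0 (copy_view r c a) (copy_view r c a)))"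
  unfolding prodop_def of_real_prod assms(1)
proof (intro prod.cong refl)
  fix c assume "c \<in> {..<n}"
  then have "copy_view r c a \<in> basis dims (Ans1 r)" using assms by (intro copy_view_basis) auto
  then show "copyop r c (if bs ! c then P1 else P0) a a = complex_of_real (if bs ! c
    then Re (P1 (copy_view r c a) (copy_view r c a)) else Re (P0 (copy_view r c a) (copy_view r c a)))"
    unfolding copyop_copy_view using P_diag_nonneg by (auto simp: complex_eq_iff)
qed

lemma objective_atleast_eq_bound:
  assumes "strategy_seq n Xs" "op_eq dims (Ans n r) (Xs r) X"
  shows "Re (\<Sum>bs\<in>{bs. length bs = n \<and> k \<le> count_ones bs}. inner_op dims (Ans n r) (prodop r P0 P1 bs) X)
    = bound_answered n k Xs r"
proof -
  let ?B = "{bs. length bs = n \<and> k \<le> count_ones bs}"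
  let ?P = "\<lambda>Q c a. Re (Q (copy_view r c a) (copy_view r c a))"
  let ?p = "\<lambda>bs a. \<Prod>c<n. if bs ! c then ?P P1 c a else ?P P0 c a"
  have "Re (inner_op dims (Ans n r) (prodop r P0 P1 bs) X)
      = (\<Sum>a\<in>basis dims (Ans n r). ?p bs a * Re (Xs r a a))"
    if "bs \<in> ?B" for bs
  proof -
    have "length bs = n" using that by simp
    then have "diagonal dims (Ans n r) (prodop r P0 P1 bs)"
      unfolding diagonal_def by (blast intro: prodop_offdiag)
    then have "inner_op dims (Ans n r) (prodop r P0 P1 bs) X
        = (\<Sum>a\<in>basis dims (Ans n r). cnj (prodop r P0 P1 bs a a) * X a a)"
      by (intro inner_op_diagonal) auto
    also have "\<dots> = (\<Sum>a\<in>basis dims (Ans n r). complex_of_real (?p bs a) * Xs r a a)"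
      using that assms(2) unfolding op_eq_def
      by (intro sum.cong refl) (simp add: prodop_diag del: of_real_prod)
    finally show ?thesis by (simp add: Re_sum del: of_real_prod)
  qed
  then have "Re (\<Sum>bs\<in>?B. inner_op dims (Ans n r) (prodop r P0 P1 bs) X)
      = (\<Sum>a\<in>basis dims (Ans n r). Re (Xs r a a) * (\<Sum>bs\<in>?B. ?p bs a))"
    unfolding Re_sum by (simp add: sum.swap[where A = ?B] sum_distrib_left mult.commute)
  also have "\<dots> = bound_answered n k Xs r"
    unfolding bound_answered_def sum_strings_atleast
  proof (intro sum.cong refl arg_cong2[where f = "(*)"] atleast_mass_cong allI impI)
    fix a c assume "a \<in> basis dims (Ans n r)" "c < n"
    then have "copy_view r c a \<in> basis dims (Ans1 r)" by (intro copy_view_basis) auto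
    then show "?P P1 c a + ?P P0 c a = weight r (copy_view r c a)"
      unfolding weight_def by (metis P0_plus_P1 add.commute plus_complex.sel(1))
  qed (simp add: opt_answered_last)
  finally show ?thesis .
qed

lemma objective_win_eq_bound:
  assumes "op_eq dims (Ans 1 r) (Xs r) X"
  shows "Re (inner_op dims (Ans1 r) P1 X) = bound_answered 1 1 Xs r"
proof -
  have "Re (inner_op dims (Ans1 r) P1 X) = (\<Sum>a\<in>basis dims (Ans1 r). Re (cnj (P1 a a) * X a a))"
    using diagonal_P1 by (simp add: inner_op_diagonal Re_sum)
  also have "\<dots> = bound_answered 1 1 Xs r"
    unfolding bound_answered_def NY_NX_1
  proof (intro sum.cong refl)
    fix a assume a: "a \<in> basis dims (Ans1 r)"
    have X: "X a a = Xs r a a" using assms a unfolding op_eq_def NY_NX_1 by simp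
    have P1: "P1 a a = complex_of_real (Re (P1 a a))"
      using P_diag_nonneg(2)[OF a] by (simp add: complex_eq_iff)
    have "Re (cnj (P1 a a) * X a a) = Re (P1 a a) * Re (Xs r a a)"
      unfolding X by (subst P1) simp
    then show "Re (cnj (P1 a a) * X a a) = Re (Xs r a a) *
      atleast_mass 1 1 (\<lambda>c. opt_answered r (copy_view r c a)) (\<lambda>c. weight r (copy_view r c a))"
      using copy_view_self[OF a] by (simp add: opt_answered_last)
  qed
  finally show ?thesis .
qed

text \<open>The optimal n-fold strategy plays the optimal single-copy strategy independently
in every copy: it is the deterministic strategy that answers best_answer everywhere.\<close>

definition greedy :: "nat \<Rightarrow> nat \<Rightarrow> idx \<Rightarrow> bool" where
  "greedy n j a \<longleftrightarrow> (\<forall>c<n. \<forall>i\<in>{1..j}. a (LY c i) = best_answer i (copy_view r c a))"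

definition greedy_strategy :: "nat \<Rightarrow> nat \<Rightarrow> op" where
  "greedy_strategy n j a b = (if a = b \<and> greedy n j a then 1 else 0)"

lemma greedy_merge_LYs:
  assumes "1 \<le> j" "j \<le> r"
  shows "greedy n j (merge a y (LYs n j)) \<longleftrightarrow>
    greedy n (j - 1) a \<and> (\<forall>c<n. y (LY c j) = best_answer j (copy_view r c a))"
proof -
  have "best_answer i (copy_view r c (merge a y (LYs n j))) = best_answer i (copy_view r c a)"
    if "c < n" "i \<le> j" for c i
    using that unfolding copy_view_merge_LY[OF assms that(1)]
    by (intro best_answer_restr fun_eq_lab) (auto simp: restr_def)
  moreover have "{1..j} = insert j {1..j - 1}" using assms(1) by auto
  ultimately show ?thesis unfolding greedy_def by (auto simp: merge_def)
qed

lemma greedy_restr: "greedy n (j - 1) (restr a (Ans n (j - 1))) \<longleftrightarrow> greedy n (j - 1) a"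
proof -
  have "best_answer i (copy_view r c (restr a (Ans n (j - 1)))) = best_answer i (copy_view r c a)"
    if "c < n" "i \<le> j - 1" for c i
    using that by (intro best_answer_restr fun_eq_lab) (auto simp: restr_def)
  then show ?thesis unfolding greedy_def by (auto simp: restr_def)
qed

lemma ptrace_greedy_strategy:
  assumes "1 \<le> j" "j \<le> r" "a \<in> basis dims (Qst n j)" "b \<in> basis dims (Qst n j)"
  shows "ptrace dims (LYs n j) (greedy_strategy n j) a b = (if a = b \<and> greedy n (j - 1) a then 1 else 0)"
proof (cases "a = b")
  case False
  then have "merge a y (LYs n j) \<noteq> merge b y (LYs n j)" for y
    using merge_restr[OF assms(3) Qst_LYs_disjoint] merge_restr[OF assms(4) Qst_LYs_disjoint] by metis
  then show ?thesis using False unfolding ptrace_def greedy_strategy_def by simp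
next
  case True
  have "best_answer j (copy_view r c a) < dY j" if "c < n" for c
    using assms(2,3) that by (intro best_answer(1)[OF assms(1,2)] copy_view_basis) auto
  then have "(\<Sum>y\<in>basis dims (LYs n j).
      if \<forall>c<n. y (LY c j) = best_answer j (copy_view r c a) then 1 else 0) = (1 :: complex)"
    by (intro sum_basis_LYs_indicator) simp
  then show ?thesis
    unfolding ptrace_def greedy_strategy_def True greedy_merge_LYs[OF assms(1,2)] by auto
qed

lemma strategy_seq_greedy: "strategy_seq n (greedy_strategy n)"
  unfolding strategy_seq_def op_eq_def
proof (intro conjI ballI)
  fix j assume "j \<in> {1..r}"
  show "psd dims (Ans n j) (greedy_strategy n j)"
    by (rule psd_diagonalI) (auto simp: greedy_strategy_def diagonal_def)
next
  fix a b assume "a \<in> basis dims (NX n 1)" "b \<in> basis dims (NX n 1)"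
  then show "ptrace dims (LYs n 1) (greedy_strategy n 1) a b = idop a b"
    using ptrace_greedy_strategy[OF order.refl r_pos] by (simp add: greedy_def idop_def)
next
  fix j a b assume j: "j \<in> {2..r}" and a: "a \<in> basis dims (Qst n j)" and b: "b \<in> basis dims (Qst n j)"
  have split: "Qst n j = Ans n (j - 1) \<union> LXs n j"
    using Qst_Suc_split[of n "j - 1"] j by simp
  have "a = b"
    if "restr a (Ans n (j - 1)) = restr b (Ans n (j - 1))" "restr a (LXs n j) = restr b (LXs n j)"
    using a b that unfolding split by (rule basis_eqI)
  then show "ptrace dims (LYs n j) (greedy_strategy n j) a b
      = tens (Ans n (j - 1)) (greedy_strategy n (j - 1)) (LXs n j) idop a b"
    using ptrace_greedy_strategy[where j = j and a = a and b = b] j a b greedy_restr[of n j a]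
    by (auto simp: tens_def greedy_strategy_def idop_def)
qed

lemma is_strategy_greedy: "is_strategy dX dY r n (greedy_strategy n r)"
  unfolding is_strategy_iff using strategy_seq_greedy by (auto simp: op_eq_def)

lemma bound_answered_greedy:
  "bound_answered n k (greedy_strategy n) r = atleast_mass n k (\<lambda>_. opt_value) (\<lambda>_. 1)"
proof (rule bound_answered_eq_opt[OF strategy_seq_greedy r_pos order.refl])
  fix j a y c
  assume j: "1 \<le> j" "j \<le> r" and "c < n"
    and "Re (greedy_strategy n j (merge a y (LYs n j)) (merge a y (LYs n j))) \<noteq> 0"
  then show "y (LY c j) = best_answer j (copy_view r c a)"
    using greedy_merge_LYs[OF j] by (auto simp: greedy_strategy_def split: if_splits)
qed

lemma win_atleast_eq: "win_atleast dX dY r P0 P1 n k = atleast_mass n k (\<lambda>_. opt_value) (\<lambda>_. 1)"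
  unfolding win_atleast_def
proof (rule cSup_eq_maximum)
  show "atleast_mass n k (\<lambda>_. opt_value) (\<lambda>_. 1) \<in> {Re (\<Sum>bs\<in>{bs. length bs = n \<and> k \<le> count_ones bs}.
      inner_op dims (Ans n r) (prodop r P0 P1 bs) X) | X. is_strategy dX dY r n X}"
    using objective_atleast_eq_bound[OF strategy_seq_greedy, where X = "greedy_strategy n r" and k = k]
      bound_answered_greedy is_strategy_greedy
    by (force simp: op_eq_def)
next
  fix z assume "z \<in> {Re (\<Sum>bs\<in>{bs. length bs = n \<and> k \<le> count_ones bs}.
      inner_op dims (Ans n r) (prodop r P0 P1 bs) X) | X. is_strategy dX dY r n X}"
  then obtain X Xs where "z = Re (\<Sum>bs\<in>{bs. length bs = n \<and> k \<le> count_ones bs}.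
      inner_op dims (Ans n r) (prodop r P0 P1 bs) X)"
    and "strategy_seq n Xs" "op_eq dims (Ans n r) (Xs r) X"
    unfolding is_strategy_iff by blast
  then show "z \<le> atleast_mass n k (\<lambda>_. opt_value) (\<lambda>_. 1)"
    using objective_atleast_eq_bound bound_answered_le_opt[OF _ r_pos order.refl] by simp
qed

lemma win_prob_eq: "win_prob dX dY r P1 = opt_value"
  unfolding win_prob_def
proof (rule cSup_eq_maximum)
  show "opt_value \<in> {Re (inner_op dims (Ans1 r) P1 X) | X. is_strategy dX dY r 1 X}"
    using objective_win_eq_bound[of "greedy_strategy 1" "greedy_strategy 1 r"]
      bound_answered_greedy[of 1 1] is_strategy_greedy
    by (force simp: op_eq_def)
next
  fix z assume "z \<in> {Re (inner_op dims (Ans1 r) P1 X) | X. is_strategy dX dY r 1 X}"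
  then obtain X Xs where "z = Re (inner_op dims (Ans1 r) P1 X)"
    and Xs: "strategy_seq 1 Xs" "op_eq dims (Ans 1 r) (Xs r) X"
    unfolding is_strategy_iff by blast
  then show "z \<le> opt_value"
    using objective_win_eq_bound[where Xs = Xs, OF Xs(2)]
      bound_answered_le_opt[OF Xs(1) r_pos order.refl, of 1]
    by simp
qed

end

theorem mainTheorem3:
  fixes r n k :: nat and dX dY :: "nat \<Rightarrow> nat" and P0 P1 :: op and R :: "nat \<Rightarrow> op"
  assumes "1 \<le> r"
    and "\<forall>j\<in>{1..r}. 0 < dX j \<and> 0 < dY j"
    and "is_verifier dX dY r P0 P1 R"
    and "diagonal (ldim dX dY) (VY 0 r \<union> VX 0 r) P0"
    and "diagonal (ldim dX dY) (VY 0 r \<union> VX 0 r) P1"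
    and "\<forall>j\<in>{1..r}. diagonal (ldim dX dY) (VY 0 (j - 1) \<union> VX 0 j) (R j)"
    and "1 \<le> n" and "k \<le> n"
  shows "win_atleast dX dY r P0 P1 n k =
           (\<Sum>t=k..n. real (n choose t) * (win_prob dX dY r P1) ^ t
                       * (1 - win_prob dX dY r P1) ^ (n - t))"
proof -
  interpret diagonal_game dX dY r P0 P1 R
    using assms(1-5) by unfold_locales auto
  show ?thesis unfolding win_atleast_eq win_prob_eq by (rule atleast_mass_const)
qed

end
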